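(* Let $S\subseteq[4]$ be nonempty, let $d_1\in\{1,2\}$, and let real numbers $x_{k,j}$ with $0\le x_{k,j}\le\frac12$ be given for $1\le k\le d_1$ and $j\in S$. For $j\in S$ define $$f_j=\frac{\prod_{k=1}^{d_1}(1-x_{k,j})}{\sum_{w\in S}\prod_{k=1}^{d_1}(1-x_{k,w})}.$$ Then for every $i,j\in S$ it holds that $\frac14\le f_i/f_j\le 4$ and $f_i\ge\frac1{13}$. *)

theory Defs
  imports Complex_Main
begin

definition fval :: "nat set \<Rightarrow> nat \<Rightarrow> (nat \<Rightarrow> nat \<Rightarrow> real) \<Rightarrow> nat \<Rightarrow> real" where
  "fval S d1 x j = (\<Prod>k=1..d1. 1 - x k j) / (\<Sum>w\<in>S. \<Prod>k=1..d1. 1 - x k w)"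

end

theory Submission
  imports Defs
begin

text \<open>Each factor 1 - x k j lies in [1/2, 1], so every unnormalized weight
  p j = \<Prod>k. (1 - x k j) lies in [1/4, 1] when d1 \<le> 2. Quotients of such weights lie in
  [1/4, 4], and a weight p i competes against at most three others of size at most 1,
  so p i / \<Sum>w. p w \<ge> (1/4) / (1/4 + 3) = 1/13.\<close>

lemma prod_bounded_factors:
  fixes f :: "'a \<Rightarrow> real"
  assumes "\<And>k. k \<in> A \<Longrightarrow> c \<le> f k \<and> f k \<le> 1" and "0 \<le> c"
  shows "c ^ card A \<le> prod f A \<and> prod f A \<le> 1"
proof
  have "c ^ card A = (\<Prod>k\<in>A. c)" by simp
  also have "\<dots> \<le> prod f A" using assms by (intro prod_mono) auto
  finally show "c ^ card A \<le> prod f A" .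
  show "prod f A \<le> 1" using assms by (intro prod_le_1) force
qed

lemma divide_bounds_unit_interval:
  fixes a b c :: real
  assumes "0 < c" "c \<le> a" "a \<le> 1" "c \<le> b" "b \<le> 1"
  shows "c \<le> a / b \<and> a / b \<le> 1 / c"
  using assms by (auto simp: field_simps intro: mult_mono order_trans[of _ "c * 1"])

lemma normalized_weight_lower_bound:
  fixes p :: "'a \<Rightarrow> real"
  assumes "finite S" "i \<in> S" "card S \<le> n"
    and bounds: "\<And>w. w \<in> S \<Longrightarrow> 0 \<le> p w \<and> p w \<le> 1"
    and "0 < c" "c \<le> p i"
  shows "c / (c + (real n - 1)) \<le> p i / sum p S"
proof -
  define m where "m = real n - 1"
  have "card (S - {i}) \<le> n - 1" using assms(1-3) by (simp add: card_Diff_singleton)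
  then have m: "0 \<le> m" "real (card (S - {i})) \<le> m"
    using assms(1-3) card_gt_0_iff[of S] by (auto simp: m_def)
  have "sum p S = p i + sum p (S - {i})" using assms(1,2) by (simp add: sum.remove)
  also have "sum p (S - {i}) \<le> real (card (S - {i}))"
    using bounds sum_mono[of "S - {i}" p "\<lambda>_. 1"] by auto
  finally have upper: "sum p S \<le> p i + m" using m by simp
  have "p i \<le> sum p S" using assms(1,2) bounds by (intro member_le_sum) auto
  then have pos: "0 < sum p S" using assms by linarith
  have "c * m \<le> p i * m" using assms m by (simp add: mult_right_mono)
  then have "c / (c + m) \<le> p i / (p i + m)"
    using assms m by (simp add: field_simps)
  also have "\<dots> \<le> p i / sum p S"
    using upper pos assms by (intro divide_left_mono) auto
  finally show ?thesis by (simp add: m_def)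
qed

theorem proposition16:
  fixes S :: "nat set" and d1 :: nat and x :: "nat \<Rightarrow> nat \<Rightarrow> real"
  assumes "S \<subseteq> {1..4}" and "S \<noteq> {}"
    and "d1 \<in> {1, 2}"
    and "\<And>k j. k \<in> {1..d1} \<Longrightarrow> j \<in> S \<Longrightarrow> 0 \<le> x k j \<and> x k j \<le> 1/2"
  shows "\<forall>i\<in>S. \<forall>j\<in>S. 1/4 \<le> fval S d1 x i / fval S d1 x j
            \<and> fval S d1 x i / fval S d1 x j \<le> 4 \<and> fval S d1 x i \<ge> 1/13"
proof (intro ballI)
  define p where "p j = (\<Prod>k=1..d1. 1 - x k j)" for j
  have p_bounds: "1/4 \<le> p j \<and> p j \<le> 1" if "j \<in> S" for j
  proof -
    have "(1/2) ^ d1 \<le> p j \<and> p j \<le> 1"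
      using prod_bounded_factors[of "{1..d1}" "1/2" "\<lambda>k. 1 - x k j"] assms(4) that
      by (force simp: p_def)
    moreover have "(1/4 :: real) \<le> (1/2) ^ d1" using assms(3) by (auto simp: power2_eq_square)
    ultimately show ?thesis by linarith
  qed
  have "finite S" using assms(1) finite_subset by blast
  have "card S \<le> 4" using card_mono[OF _ assms(1)] by simp
  fix i j assume "i \<in> S" "j \<in> S"
  have lower: "1/13 \<le> p i / sum p S"
    using normalized_weight_lower_bound[of S i 4 p "1/4"] \<open>finite S\<close> \<open>card S \<le> 4\<close>
      \<open>i \<in> S\<close> p_bounds by force
  have "p i \<le> sum p S"
    using \<open>finite S\<close> \<open>i \<in> S\<close> p_bounds by (intro member_le_sum) force+
  then have sum_pos: "0 < sum p S" using p_bounds[OF \<open>i \<in> S\<close>] by linarith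
  have fval_eq: "fval S d1 x k = p k / sum p S" for k by (simp add: fval_def p_def)
  have ratio: "1/4 \<le> p i / p j \<and> p i / p j \<le> 4"
    using divide_bounds_unit_interval[of "1/4" "p i" "p j"]
      p_bounds[OF \<open>i \<in> S\<close>] p_bounds[OF \<open>j \<in> S\<close>] by simp
  show "1/4 \<le> fval S d1 x i / fval S d1 x j
      \<and> fval S d1 x i / fval S d1 x j \<le> 4 \<and> fval S d1 x i \<ge> 1/13"
    using lower sum_pos ratio by (simp add: fval_eq)
qed

end
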